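(* Let $\mathcal P$ be a Fitting program over a bilattice $\mathcal B$ and $\alpha\in\{\mathcal F,\mathcal T,\mathcal U,\mathcal I\}$. Then $\Psi'^{\alpha}_{\mathcal P}$ has two extreme oscillation points under the truth ordering, denoted $Fix^{\alpha}_{\mathcal F}$ and $Fix^{\alpha}_{\mathcal T}$, and $Fix^{\alpha}_{\mathcal F}\le_t Fix^{\alpha}_{\mathcal T}$.
   Context: A bilattice $\langle\mathcal B,\le_t,\le_k\rangle$ is a nonempty set with two partial orders, each making $\mathcal B$ a lattice with top and bottom. Under $\le_t$, meet and join are $\wedge,\vee$ (infinitary $\bigwedge,\bigvee$), bottom $\mathcal F$, top $\mathcal T$; under $\le_k$, meet and join are $\otimes,\oplus$ (infinitary $\bigotimes,\bigoplus$), bottom $\mathcal U$, top $\mathcal I$. Standing assumptions: $\mathcal B$ is complete for both orders, infinitely distributive, satisfies the infinitary interlacing conditions, and has a negation $\neg$ (an involution reversing $\le_t$ and preserving $\le_k$). A formula is built from literals ($A$ or $\neg A$) and elements of $\mathcal B$ using $\wedge,\vee,\otimes,\oplus,\exists,\forall$ (with built-in predicate $equal$). A clause is $P(x_1,\dots,x_n)\leftarrow\phi(x_1,\dots,x_n)$ with the body's free variables among $x_1,\dots,x_n$. A Fitting program is a finite set of clauses with no predicate letter heading more than one clause; Inst-$\mathcal P$ is its set of ground instances. $\mathcal V(\mathcal B)$: maps from ground atoms to $\mathcal B$ with pointwise orders/operations. Valuations extend to closed formulas compositionally ($v(\beta)=\beta$, connectives pointwise, $\exists$ as $\bigvee$,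 $\forall$ as $\bigwedge$ over closed-term instances, $v(equal(s,t))=\mathcal T$ if $s=t$ else $\mathcal F$). The contrajoin $v\bigtriangleup w$ evaluates likewise but gives $A$ the value $v(A)$ and $\neg A$ the value $\neg w(A)$. $\Psi_{\mathcal P}^{\alpha}(v,w)(A)=\alpha$ if $A$ heads no member of Inst-$\mathcal P$, and $=(v\bigtriangleup w)(B)$ if $A\leftarrow B\in$ Inst-$\mathcal P$. $\Psi'^{\alpha}_{\mathcal P}(v)$ is the $\le_t$-least (resp. $\le_t$-greatest, $\le_k$-least, $\le_k$-greatest) fixpoint of $x\mapsto\Psi_{\mathcal P}^{\alpha}(x,v)$ when $\alpha=\mathcal F$ (resp. $\mathcal T,\mathcal U,\mathcal I$), obtained as the limit of the transfinite iteration from the constant valuation $\alpha$. For an anti-monotonic $f$ on a complete lattice, the extreme oscillation points are the elements $\mu,\nu$ that are the least and greatest fixpoints of $f\circ f$; they satisfy $f(\mu)=\nu$, $f(\nu)=\mu$, and any $x,y$ with $f(x)=y$, $f(y)=x$ lie between $\mu$ and $\nu$. Here the lattice is $(\mathcal V(\mathcal B),\le_t)$, and $Fix^{\alpha}_{\mathcal F}$, $Fix^{\alpha}_{\mathcal T}$ denote respectively the $\le_t$-least and $\le_t$-greatest fixpoint of $\Psi'^{\alpha}_{\mathcal P}\circ\Psi'^{\alpha}_{\mathcal P}$. *)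

theory Defs
  imports Main
begin

text \<open>The truth order is the type-class order of a complete lattice:
  meet/join are inf/sup, infinitary Inf/Sup, bottom F = bot, top T = top.
  The knowledge order leqk with infinitary meet kInf and join kSup is given by
  parameters; binary k-meet/k-join are kInf {a,b} and kSup {a,b};
  U = kInf UNIV, I = kSup UNIV.  neg is the negation.\<close>

definition kmeet :: "('b set \<Rightarrow> 'b) \<Rightarrow> 'b \<Rightarrow> 'b \<Rightarrow> 'b" where
  "kmeet kInf a b = kInf {a, b}"

definition kjoin :: "('b set \<Rightarrow> 'b) \<Rightarrow> 'b \<Rightarrow> 'b \<Rightarrow> 'b" where
  "kjoin kSup a b = kSup {a, b}"

locale bilattice =
  fixes leqk :: "'b::complete_lattice \<Rightarrow> 'b \<Rightarrow> bool"
    and kInf :: "'b set \<Rightarrow> 'b"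
    and kSup :: "'b set \<Rightarrow> 'b"
    and neg :: "'b \<Rightarrow> 'b"
  assumes k_refl: "leqk a a"
    and k_trans: "leqk a b \<Longrightarrow> leqk b c \<Longrightarrow> leqk a c"
    and k_antisym: "leqk a b \<Longrightarrow> leqk b a \<Longrightarrow> a = b"
    and kInf_lower: "x \<in> A \<Longrightarrow> leqk (kInf A) x"
    and kInf_greatest: "(\<And>x. x \<in> A \<Longrightarrow> leqk z x) \<Longrightarrow> leqk z (kInf A)"
    and kSup_upper: "x \<in> A \<Longrightarrow> leqk x (kSup A)"
    and kSup_least: "(\<And>x. x \<in> A \<Longrightarrow> leqk x z) \<Longrightarrow> leqk (kSup A) z"
    and neg_neg: "neg (neg a) = a"
    and neg_t: "a \<le> b \<Longrightarrow> neg b \<le> neg a"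
    and neg_k: "leqk a b \<Longrightarrow> leqk (neg a) (neg b)"
    \<comment> \<open>infinitary interlacing: for a family of pairs (a_i, b_i), i in R\<close>
    and interlace_kInf: "(\<forall>(a, b) \<in> R. a \<le> b) \<Longrightarrow> kInf (fst ` R) \<le> kInf (snd ` R)"
    and interlace_kSup: "(\<forall>(a, b) \<in> R. a \<le> b) \<Longrightarrow> kSup (fst ` R) \<le> kSup (snd ` R)"
    and interlace_Inf: "(\<forall>(a, b) \<in> R. leqk a b) \<Longrightarrow> leqk (Inf (fst ` R)) (Inf (snd ` R))"
    and interlace_Sup: "(\<forall>(a, b) \<in> R. leqk a b) \<Longrightarrow> leqk (Sup (fst ` R)) (Sup (snd ` R))"
    and dist_inf_Sup: "B \<noteq> {} \<Longrightarrow> inf a (Sup B) = Sup (inf a ` B)"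
    and dist_inf_kInf: "B \<noteq> {} \<Longrightarrow> inf a (kInf B) = kInf (inf a ` B)"
    and dist_inf_kSup: "B \<noteq> {} \<Longrightarrow> inf a (kSup B) = kSup (inf a ` B)"
    and dist_sup_Inf: "B \<noteq> {} \<Longrightarrow> sup a (Inf B) = Inf (sup a ` B)"
    and dist_sup_kInf: "B \<noteq> {} \<Longrightarrow> sup a (kInf B) = kInf (sup a ` B)"
    and dist_sup_kSup: "B \<noteq> {} \<Longrightarrow> sup a (kSup B) = kSup (sup a ` B)"
    and dist_kmeet_Inf: "B \<noteq> {} \<Longrightarrow> kmeet kInf a (Inf B) = Inf (kmeet kInf a ` B)"
    and dist_kmeet_Sup: "B \<noteq> {} \<Longrightarrow> kmeet kInf a (Sup B) = Sup (kmeet kInf a ` B)"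
    and dist_kmeet_kSup: "B \<noteq> {} \<Longrightarrow> kmeet kInf a (kSup B) = kSup (kmeet kInf a ` B)"
    and dist_kjoin_Inf: "B \<noteq> {} \<Longrightarrow> kjoin kSup a (Inf B) = Inf (kjoin kSup a ` B)"
    and dist_kjoin_Sup: "B \<noteq> {} \<Longrightarrow> kjoin kSup a (Sup B) = Sup (kjoin kSup a ` B)"
    and dist_kjoin_kInf: "B \<noteq> {} \<Longrightarrow> kjoin kSup a (kInf B) = kInf (kjoin kSup a ` B)"

datatype ('f, 'v) trm = Var 'v | Fn 'f "('f, 'v) trm list"

datatype 'f gtrm = GFn 'f "'f gtrm list"

type_synonym ('p, 'f) gatom = "'p \<times> 'f gtrm list"

type_synonym ('p, 'f, 'b) valuation = "('p, 'f) gatom \<Rightarrow> 'b"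

datatype ('p, 'f, 'v) atm = PAt 'p "('f, 'v) trm list" | EqAt "('f, 'v) trm" "('f, 'v) trm"

text \<open>Formulas: literals (Lit True A is A, Lit False A is the negated atom),
  bilattice constants, the four binary connectives and the quantifiers.\<close>
datatype ('p, 'f, 'v, 'b) fm =
    Lit bool "('p, 'f, 'v) atm"
  | Cst 'b
  | Conj "('p, 'f, 'v, 'b) fm" "('p, 'f, 'v, 'b) fm"
  | Disj "('p, 'f, 'v, 'b) fm" "('p, 'f, 'v, 'b) fm"
  | KMeet "('p, 'f, 'v, 'b) fm" "('p, 'f, 'v, 'b) fm"
  | KJoin "('p, 'f, 'v, 'b) fm" "('p, 'f, 'v, 'b) fm"
  | Ex 'v "('p, 'f, 'v, 'b) fm"
  | All 'v "('p, 'f, 'v, 'b) fm"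

fun fv_trm :: "('f, 'v) trm \<Rightarrow> 'v set" where
  "fv_trm (Var x) = {x}"
| "fv_trm (Fn f ts) = \<Union> (set (map fv_trm ts))"

fun fv_atm :: "('p, 'f, 'v) atm \<Rightarrow> 'v set" where
  "fv_atm (PAt p ts) = \<Union> (set (map fv_trm ts))"
| "fv_atm (EqAt s t) = fv_trm s \<union> fv_trm t"

fun fv :: "('p, 'f, 'v, 'b) fm \<Rightarrow> 'v set" where
  "fv (Lit b a) = fv_atm a"
| "fv (Cst c) = {}"
| "fv (Conj \<phi> \<psi>) = fv \<phi> \<union> fv \<psi>"
| "fv (Disj \<phi> \<psi>) = fv \<phi> \<union> fv \<psi>"
| "fv (KMeet \<phi> \<psi>) = fv \<phi> \<union> fv \<psi>"
| "fv (KJoin \<phi> \<psi>) = fv \<phi> \<union> fv \<psi>"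
| "fv (Ex x \<phi>) = fv \<phi> - {x}"
| "fv (All x \<phi>) = fv \<phi> - {x}"

text \<open>Clauses P(x_1,...,x_n) <- body, represented as (P, [x_1,...,x_n], body).\<close>
type_synonym ('p, 'f, 'v, 'b) clause = "'p \<times> 'v list \<times> ('p, 'f, 'v, 'b) fm"

definition fitting_program :: "('p, 'f, 'v, 'b) clause set \<Rightarrow> bool" where
  "fitting_program P \<longleftrightarrow> finite P
     \<and> (\<forall>(p, xs, \<phi>) \<in> P. fv \<phi> \<subseteq> set xs)
     \<and> (\<forall>c \<in> P. \<forall>c' \<in> P. fst c = fst c' \<longrightarrow> c = c')"

fun inst :: "('v \<Rightarrow> 'f gtrm) \<Rightarrow> ('f, 'v) trm \<Rightarrow> 'f gtrm" where
  "inst \<sigma> (Var x) = \<sigma> x"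
| "inst \<sigma> (Fn f ts) = GFn f (map (inst \<sigma>) ts)"

fun atm_val :: "('p, 'f, 'b::complete_lattice) valuation \<Rightarrow> ('v \<Rightarrow> 'f gtrm)
    \<Rightarrow> ('p, 'f, 'v) atm \<Rightarrow> 'b" where
  "atm_val v \<sigma> (PAt p ts) = v (p, map (inst \<sigma>) ts)"
| "atm_val v \<sigma> (EqAt s t) = (if inst \<sigma> s = inst \<sigma> t then top else bot)"

text \<open>The ordinary extension of a valuation v is contra kInf kSup neg v v.\<close>
fun contra :: "('b::complete_lattice set \<Rightarrow> 'b) \<Rightarrow> ('b set \<Rightarrow> 'b) \<Rightarrow> ('b \<Rightarrow> 'b)
    \<Rightarrow> ('p, 'f, 'b) valuation \<Rightarrow> ('p, 'f, 'b) valuation \<Rightarrow> ('v \<Rightarrow> 'f gtrm)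
    \<Rightarrow> ('p, 'f, 'v, 'b) fm \<Rightarrow> 'b" where
  "contra kInf kSup neg v w \<sigma> (Lit True a) = atm_val v \<sigma> a"
| "contra kInf kSup neg v w \<sigma> (Lit False a) = neg (atm_val w \<sigma> a)"
| "contra kInf kSup neg v w \<sigma> (Cst c) = c"
| "contra kInf kSup neg v w \<sigma> (Conj \<phi> \<psi>) =
     inf (contra kInf kSup neg v w \<sigma> \<phi>) (contra kInf kSup neg v w \<sigma> \<psi>)"
| "contra kInf kSup neg v w \<sigma> (Disj \<phi> \<psi>) =
     sup (contra kInf kSup neg v w \<sigma> \<phi>) (contra kInf kSup neg v w \<sigma> \<psi>)"
| "contra kInf kSup neg v w \<sigma> (KMeet \<phi> \<psi>) =
     kmeet kInf (contra kInf kSup neg v w \<sigma> \<phi>) (contra kInf kSup neg v w \<sigma> \<psi>)"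
| "contra kInf kSup neg v w \<sigma> (KJoin \<phi> \<psi>) =
     kjoin kSup (contra kInf kSup neg v w \<sigma> \<phi>) (contra kInf kSup neg v w \<sigma> \<psi>)"
| "contra kInf kSup neg v w \<sigma> (Ex x \<phi>) =
     (SUP t. contra kInf kSup neg v w (\<sigma>(x := t)) \<phi>)"
| "contra kInf kSup neg v w \<sigma> (All x \<phi>) =
     (INF t. contra kInf kSup neg v w (\<sigma>(x := t)) \<phi>)"

datatype alpha = AF | AT | AU | AI

fun alpha_val :: "('b::complete_lattice set \<Rightarrow> 'b) \<Rightarrow> ('b set \<Rightarrow> 'b) \<Rightarrow> alpha \<Rightarrow> 'b" where
  "alpha_val kInf kSup AF = bot"
| "alpha_val kInf kSup AT = top"
| "alpha_val kInf kSup AU = kInf UNIV"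
| "alpha_val kInf kSup AI = kSup UNIV"

text \<open>The ground atom A heads a member of Inst-P iff some clause (p, xs, phi) of P
  and some assignment sigma of closed terms satisfy A = (p, map sigma xs);
  the body of that ground instance is phi instantiated by sigma.\<close>
definition heads :: "('p, 'f, 'v, 'b) clause set \<Rightarrow> ('p, 'f) gatom
    \<Rightarrow> ('p, 'f, 'v, 'b) clause \<Rightarrow> ('v \<Rightarrow> 'f gtrm) \<Rightarrow> bool" where
  "heads P A c \<sigma> \<longleftrightarrow> c \<in> P \<and> A = (fst c, map \<sigma> (fst (snd c)))"

definition Psi :: "('b::complete_lattice set \<Rightarrow> 'b) \<Rightarrow> ('b set \<Rightarrow> 'b) \<Rightarrow> ('b \<Rightarrow> 'b)
    \<Rightarrow> alpha \<Rightarrow> ('p, 'f, 'v, 'b) clause set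
    \<Rightarrow> ('p, 'f, 'b) valuation \<Rightarrow> ('p, 'f, 'b) valuation \<Rightarrow> ('p, 'f, 'b) valuation" where
  "Psi kInf kSup neg a P v w A =
     (if \<exists>c \<sigma>. heads P A c \<sigma>
      then (let (c, \<sigma>) = (SOME (c, \<sigma>). heads P A c \<sigma>)
            in contra kInf kSup neg v w \<sigma> (snd (snd c)))
      else alpha_val kInf kSup a)"

definition vleqk :: "('b \<Rightarrow> 'b \<Rightarrow> bool) \<Rightarrow> ('a \<Rightarrow> 'b) \<Rightarrow> ('a \<Rightarrow> 'b) \<Rightarrow> bool" where
  "vleqk leqk x y \<longleftrightarrow> (\<forall>A. leqk (x A) (y A))"

definition vkInf :: "('b set \<Rightarrow> 'b) \<Rightarrow> ('a \<Rightarrow> 'b) set \<Rightarrow> 'a \<Rightarrow> 'b" where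
  "vkInf kInf S = (\<lambda>A. kInf ((\<lambda>x. x A) ` S))"

definition vkSup :: "('b set \<Rightarrow> 'b) \<Rightarrow> ('a \<Rightarrow> 'b) set \<Rightarrow> 'a \<Rightarrow> 'b" where
  "vkSup kSup S = (\<lambda>A. kSup ((\<lambda>x. x A) ` S))"

definition klfp :: "('b \<Rightarrow> 'b \<Rightarrow> bool) \<Rightarrow> ('b set \<Rightarrow> 'b)
    \<Rightarrow> (('a \<Rightarrow> 'b) \<Rightarrow> ('a \<Rightarrow> 'b)) \<Rightarrow> 'a \<Rightarrow> 'b" where
  "klfp leqk kInf f = vkInf kInf {x. vleqk leqk (f x) x}"

definition kgfp :: "('b \<Rightarrow> 'b \<Rightarrow> bool) \<Rightarrow> ('b set \<Rightarrow> 'b)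
    \<Rightarrow> (('a \<Rightarrow> 'b) \<Rightarrow> ('a \<Rightarrow> 'b)) \<Rightarrow> 'a \<Rightarrow> 'b" where
  "kgfp leqk kSup f = vkSup kSup {x. vleqk leqk x (f x)}"

fun Psi' :: "('b::complete_lattice \<Rightarrow> 'b \<Rightarrow> bool) \<Rightarrow> ('b set \<Rightarrow> 'b) \<Rightarrow> ('b set \<Rightarrow> 'b)
    \<Rightarrow> ('b \<Rightarrow> 'b) \<Rightarrow> alpha \<Rightarrow> ('p, 'f, 'v, 'b) clause set
    \<Rightarrow> ('p, 'f, 'b) valuation \<Rightarrow> ('p, 'f, 'b) valuation" where
  "Psi' leqk kInf kSup neg AF P v = lfp (\<lambda>x. Psi kInf kSup neg AF P x v)"
| "Psi' leqk kInf kSup neg AT P v = gfp (\<lambda>x. Psi kInf kSup neg AT P x v)"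
| "Psi' leqk kInf kSup neg AU P v = klfp leqk kInf (\<lambda>x. Psi kInf kSup neg AU P x v)"
| "Psi' leqk kInf kSup neg AI P v = kgfp leqk kSup (\<lambda>x. Psi kInf kSup neg AI P x v)"

definition extreme_oscillation_points :: "('a::complete_lattice \<Rightarrow> 'a) \<Rightarrow> 'a \<Rightarrow> 'a \<Rightarrow> bool" where
  "extreme_oscillation_points f \<mu> \<nu> \<longleftrightarrow>
     antimono f
     \<and> f (f \<mu>) = \<mu> \<and> (\<forall>x. f (f x) = x \<longrightarrow> \<mu> \<le> x)
     \<and> f (f \<nu>) = \<nu> \<and> (\<forall>x. f (f x) = x \<longrightarrow> x \<le> \<nu>)
     \<and> f \<mu> = \<nu> \<and> f \<nu> = \<mu>
     \<and> (\<forall>x y. f x = y \<and> f y = x \<longrightarrow> \<mu> \<le> x \<and> x \<le> \<nu> \<and> \<mu> \<le> y \<and> y \<le> \<nu>)"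

end

theory Submission
  imports Defs
begin

text \<open>
  \<open>\<Psi>(x, v)\<close> is \<open>\<le>\<^sub>t\<close>-monotone in \<open>x\<close> and \<open>\<le>\<^sub>t\<close>-antitone in \<open>v\<close>: \<open>v\<close> is only read through
  negated literals, and every connective is \<open>\<le>\<^sub>t\<close>-monotone (the knowledge connectives by
  interlacing). Hence each extreme fixpoint \<open>\<Psi>'\<^sup>\<alpha>(v)\<close> decreases as \<open>v\<close> increases: for
  \<open>\<alpha> = \<F>, \<T>\<close> by Knaster-Tarski; for \<open>\<alpha> = \<U>, \<I>\<close> because the two fixpoints to be compared
  arise together as the componentwise \<open>\<le>\<^sub>k\<close>-join (meet) of a set of \<open>\<le>\<^sub>t\<close>-ordered pairs,
  and by interlacing such joins (meets) preserve \<open>\<le>\<^sub>t\<close>. So \<open>\<Psi>'\<^sup>\<alpha>\<close> is antitone, its square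
  is monotone, and the least and greatest fixpoints of the square are the extreme oscillation
  points of \<open>\<Psi>'\<^sup>\<alpha>\<close>.
\<close>

lemma mono_comp_antimono:
  assumes "antimono f" and "antimono g"
  shows "mono (f \<circ> g)"
  using assms by (auto intro!: monoI dest: antimonoD)

lemma extreme_oscillation_points_lfp_gfp:
  fixes g :: "'a::complete_lattice \<Rightarrow> 'a"
  assumes anti: "antimono g"
  shows "extreme_oscillation_points g (lfp (g \<circ> g)) (gfp (g \<circ> g))"
proof -
  let ?\<mu> = "lfp (g \<circ> g)" and ?\<nu> = "gfp (g \<circ> g)"
  have mono: "mono (g \<circ> g)" using mono_comp_antimono[OF anti anti] .
  have \<mu>: "g (g ?\<mu>) = ?\<mu>" using lfp_unfold[OF mono] by simp
  have \<nu>: "g (g ?\<nu>) = ?\<nu>" using gfp_unfold[OF mono] by simp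
  have least: "?\<mu> \<le> x" if "g (g x) = x" for x by (rule lfp_lowerbound) (simp add: that)
  have greatest: "x \<le> ?\<nu>" if "g (g x) = x" for x by (rule gfp_upperbound) (simp add: that)
  have "g ?\<mu> \<le> ?\<nu>" using greatest \<mu> by simp
  moreover have "?\<nu> \<le> g ?\<mu>"
  proof -
    have "?\<mu> \<le> g ?\<nu>" using least \<nu> by simp
    then have "g (g ?\<nu>) \<le> g ?\<mu>" by (rule antimonoD[OF anti])
    then show ?thesis using \<nu> by simp
  qed
  ultimately have g\<mu>: "g ?\<mu> = ?\<nu>" by (rule antisym)
  then have "g ?\<nu> = ?\<mu>" using \<mu> by simp
  then show ?thesis
    unfolding extreme_oscillation_points_def using anti \<mu> \<nu> least greatest g\<mu> by auto
qed

text \<open>An abstraction of the knowledge order that also covers its converse, so that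
  \<open>\<le>\<^sub>k\<close>-greatest fixpoints become least fixpoints of the converse order (with the roles of
  \<open>kInf\<close> and \<open>kSup\<close> swapped).\<close>

locale complete_interlaced_order =
  fixes le :: "'b::complete_lattice \<Rightarrow> 'b \<Rightarrow> bool"
    and meet join :: "'b set \<Rightarrow> 'b"
  assumes le_trans: "le a b \<Longrightarrow> le b c \<Longrightarrow> le a c"
    and le_antisym: "le a b \<Longrightarrow> le b a \<Longrightarrow> a = b"
    and meet_lower: "x \<in> A \<Longrightarrow> le (meet A) x"
    and meet_greatest: "(\<And>x. x \<in> A \<Longrightarrow> le z x) \<Longrightarrow> le z (meet A)"
    and join_upper: "x \<in> A \<Longrightarrow> le x (join A)"
    and join_least: "(\<And>x. x \<in> A \<Longrightarrow> le x z) \<Longrightarrow> le (join A) z"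
    and join_interlaced: "(\<forall>(a, b) \<in> R. a \<le> b) \<Longrightarrow> join (fst ` R) \<le> join (snd ` R)"
begin

lemma vleqk_trans: "vleqk le x y \<Longrightarrow> vleqk le y z \<Longrightarrow> vleqk le x z"
  unfolding vleqk_def by (blast intro: le_trans)

lemma vleqk_antisym: "vleqk le x y \<Longrightarrow> vleqk le y x \<Longrightarrow> x = y"
  unfolding vleqk_def by (blast intro: le_antisym)

lemma vkSup_upper: "x \<in> S \<Longrightarrow> vleqk le x (vkSup join S)"
  unfolding vleqk_def vkSup_def by (auto intro: join_upper)

lemma vkSup_least: "(\<And>x. x \<in> S \<Longrightarrow> vleqk le x z) \<Longrightarrow> vleqk le (vkSup join S) z"
  unfolding vleqk_def vkSup_def by (auto intro!: join_least)

lemma vkSup_interlaced: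
  assumes "\<forall>(x, y) \<in> R. x \<le> y"
  shows "vkSup join (fst ` R) \<le> vkSup join (snd ` R)"
proof (rule le_funI)
  fix A
  let ?R\<^sub>A = "(\<lambda>(x, y). (x A, y A)) ` R"
  have "fst ` ?R\<^sub>A = (\<lambda>x. x A) ` fst ` R" and "snd ` ?R\<^sub>A = (\<lambda>x. x A) ` snd ` R"
    by (simp_all add: image_image case_prod_beta)
  moreover have "join (fst ` ?R\<^sub>A) \<le> join (snd ` ?R\<^sub>A)"
    using assms by (intro join_interlaced) (auto simp: le_fun_def)
  ultimately show "vkSup join (fst ` R) A \<le> vkSup join (snd ` R) A"
    by (simp add: vkSup_def)
qed

lemma vkSup_postfixpoint:
  assumes mono: "monotone (vleqk le) (vleqk le) f"
    and post: "\<And>x. x \<in> S \<Longrightarrow> vleqk le x (f x)"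
  shows "vleqk le (vkSup join S) (f (vkSup join S))"
proof (rule vkSup_least)
  fix x assume x: "x \<in> S"
  then have "vleqk le x (vkSup join S)" by (rule vkSup_upper)
  then have "vleqk le (f x) (f (vkSup join S))" by (rule monotoneD[OF mono])
  with post[OF x] show "vleqk le x (f (vkSup join S))" by (rule vleqk_trans)
qed

lemma klfp_lower: "vleqk le (f x) x \<Longrightarrow> vleqk le (klfp le meet f) x"
  unfolding klfp_def vkInf_def vleqk_def by (auto intro: meet_lower)

lemma klfp_greatest:
  "(\<And>x. vleqk le (f x) x \<Longrightarrow> vleqk le z x) \<Longrightarrow> vleqk le z (klfp le meet f)"
  unfolding klfp_def vkInf_def vleqk_def by (auto intro!: meet_greatest)

lemma klfp_prefixpoint:
  assumes "monotone (vleqk le) (vleqk le) f"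
  shows "vleqk le (f (klfp le meet f)) (klfp le meet f)"
proof (rule klfp_greatest)
  fix x assume x_pre: "vleqk le (f x) x"
  then have "vleqk le (klfp le meet f) x" by (rule klfp_lower)
  then have "vleqk le (f (klfp le meet f)) (f x)" by (rule monotoneD[OF assms])
  then show "vleqk le (f (klfp le meet f)) x" using x_pre by (rule vleqk_trans)
qed

lemma step_below_klfp:
  assumes mono: "monotone (vleqk le) (vleqk le) f"
    and below: "vleqk le x (klfp le meet f)"
  shows "vleqk le (f x) (klfp le meet f)"
proof -
  from below have "vleqk le (f x) (f (klfp le meet f))" by (rule monotoneD[OF mono])
  then show ?thesis using klfp_prefixpoint[OF mono] by (rule vleqk_trans)
qed

text \<open>The pairs in \<open>S\<close> approximate both least fixpoints simultaneously. Their componentwise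
  join \<open>(X, Y)\<close> is mapped into \<open>S\<close> by \<open>(f, g)\<close>, so it is the pair of least fixpoints,
  and interlacing gives \<open>X \<le> Y\<close>.\<close>

lemma klfp_t_mono:
  assumes mono_f: "monotone (vleqk le) (vleqk le) f"
    and mono_g: "monotone (vleqk le) (vleqk le) g"
    and f_le_g: "\<And>x y. x \<le> y \<Longrightarrow> f x \<le> g y"
  shows "klfp le meet f \<le> klfp le meet g"
proof -
  let ?L\<^sub>f = "klfp le meet f" and ?L\<^sub>g = "klfp le meet g"
  define S where "S = {(x, y). x \<le> y \<and> vleqk le x (f x) \<and> vleqk le y (g y)
                               \<and> vleqk le x ?L\<^sub>f \<and> vleqk le y ?L\<^sub>g}"
  define X where "X = vkSup join (fst ` S)"
  define Y where "Y = vkSup join (snd ` S)"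
  have "X \<le> Y"
    unfolding X_def Y_def by (rule vkSup_interlaced) (auto simp: S_def)
  have X_post: "vleqk le X (f X)"
    unfolding X_def by (rule vkSup_postfixpoint[OF mono_f]) (auto simp: S_def)
  have Y_post: "vleqk le Y (g Y)"
    unfolding Y_def by (rule vkSup_postfixpoint[OF mono_g]) (auto simp: S_def)
  have X_below: "vleqk le X ?L\<^sub>f"
    unfolding X_def by (rule vkSup_least) (auto simp: S_def)
  have Y_below: "vleqk le Y ?L\<^sub>g"
    unfolding Y_def by (rule vkSup_least) (auto simp: S_def)
  have "(f X, g Y) \<in> S"
  proof -
    have "vleqk le (f X) ?L\<^sub>f" using mono_f X_below by (rule step_below_klfp)
    moreover have "vleqk le (g Y) ?L\<^sub>g" using mono_g Y_below by (rule step_below_klfp)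
    moreover have "vleqk le (f X) (f (f X))" using X_post by (rule monotoneD[OF mono_f])
    moreover have "vleqk le (g Y) (g (g Y))" using Y_post by (rule monotoneD[OF mono_g])
    ultimately show ?thesis using f_le_g[OF \<open>X \<le> Y\<close>] by (simp add: S_def)
  qed
  then have "vleqk le (f X) X" and "vleqk le (g Y) Y"
    unfolding X_def Y_def by (force intro: vkSup_upper)+
  then have "X = ?L\<^sub>f" and "Y = ?L\<^sub>g"
    using X_below Y_below by (auto intro: vleqk_antisym klfp_lower)
  with \<open>X \<le> Y\<close> show ?thesis by simp
qed

end

lemma kgfp_eq_klfp_conversep: "kgfp le join f = klfp (\<lambda>a b. le b a) join f"
  by (simp add: kgfp_def klfp_def vkSup_def vkInf_def vleqk_def)

lemma monotone_vleqk_conversep: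
  "monotone (vleqk le) (vleqk le) f
     \<Longrightarrow> monotone (vleqk (\<lambda>a b. le b a)) (vleqk (\<lambda>a b. le b a)) f"
  by (auto simp: monotone_def vleqk_def)

sublocale bilattice \<subseteq> k_order: complete_interlaced_order leqk kInf kSup
  by unfold_locales (fact k_trans k_antisym kInf_lower kInf_greatest kSup_upper kSup_least
      interlace_kSup)+

sublocale bilattice \<subseteq> k_order_dual: complete_interlaced_order "\<lambda>a b. leqk b a" kSup kInf
  by unfold_locales
    (fact kSup_upper kSup_least kInf_lower kInf_greatest interlace_kInf
      | blast intro: k_trans k_antisym)+

context bilattice
begin

lemma kmeet_t_mono: "a \<le> a' \<Longrightarrow> b \<le> b' \<Longrightarrow> kmeet kInf a b \<le> kmeet kInf a' b'"
  unfolding kmeet_def using interlace_kInf[of "{(a, a'), (b, b')}"] by auto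

lemma kjoin_t_mono: "a \<le> a' \<Longrightarrow> b \<le> b' \<Longrightarrow> kjoin kSup a b \<le> kjoin kSup a' b'"
  unfolding kjoin_def using interlace_kSup[of "{(a, a'), (b, b')}"] by auto

lemma kmeet_k_mono: "leqk a a' \<Longrightarrow> leqk b b' \<Longrightarrow> leqk (kmeet kInf a b) (kmeet kInf a' b')"
  unfolding kmeet_def by (rule kInf_greatest) (auto intro: k_trans kInf_lower)

lemma kjoin_k_mono: "leqk a a' \<Longrightarrow> leqk b b' \<Longrightarrow> leqk (kjoin kSup a b) (kjoin kSup a' b')"
  unfolding kjoin_def by (rule kSup_least) (auto intro: k_trans kSup_upper)

lemma inf_k_mono: "leqk a a' \<Longrightarrow> leqk b b' \<Longrightarrow> leqk (inf a b) (inf a' b')"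
  using interlace_Inf[of "{(a, a'), (b, b')}"] by auto

lemma sup_k_mono: "leqk a a' \<Longrightarrow> leqk b b' \<Longrightarrow> leqk (sup a b) (sup a' b')"
  using interlace_Sup[of "{(a, a'), (b, b')}"] by auto

lemma INF_k_mono: "(\<And>t. leqk (f t) (g t)) \<Longrightarrow> leqk (INF t. f t) (INF t. g t)"
  using interlace_Inf[of "range (\<lambda>t. (f t, g t))"] by (simp add: image_image)

lemma SUP_k_mono: "(\<And>t. leqk (f t) (g t)) \<Longrightarrow> leqk (SUP t. f t) (SUP t. g t)"
  using interlace_Sup[of "range (\<lambda>t. (f t, g t))"] by (simp add: image_image)

lemma contra_t_mono_antimono:
  assumes "v \<le> v'" and "w' \<le> w"
  shows "contra kInf kSup neg v w \<sigma> \<phi> \<le> contra kInf kSup neg v' w' \<sigma> \<phi>"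
proof (induction \<phi> arbitrary: \<sigma>)
  case (Lit positive at)
  then show ?case
    using assms by (cases positive; cases at) (auto simp: le_fun_def intro: neg_t)
next
  case (Conj \<phi> \<psi>) then show ?case by (metis contra.simps(4) inf_mono)
next
  case (Disj \<phi> \<psi>) then show ?case by (metis contra.simps(5) sup_mono)
next
  case (KMeet \<phi> \<psi>) then show ?case by (auto intro: kmeet_t_mono)
next
  case (KJoin \<phi> \<psi>) then show ?case by (auto intro: kjoin_t_mono)
next
  case (Ex x \<phi>) then show ?case by (auto intro: SUP_mono)
next
  case (All x \<phi>) then show ?case by (auto intro: INF_mono)
qed simp

lemma contra_k_mono:
  assumes "vleqk leqk v v'"
  shows "leqk (contra kInf kSup neg v w \<sigma> \<phi>) (contra kInf kSup neg v' w \<sigma> \<phi>)"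
proof (induction \<phi> arbitrary: \<sigma>)
  case (Lit positive at)
  then show ?case
    using assms by (cases positive; cases at) (auto simp: vleqk_def k_refl)
next
  case (Conj \<phi> \<psi>) then show ?case by (auto intro: inf_k_mono)
next
  case (Disj \<phi> \<psi>) then show ?case by (auto intro: sup_k_mono)
next
  case (KMeet \<phi> \<psi>) then show ?case by (auto intro: kmeet_k_mono)
next
  case (KJoin \<phi> \<psi>) then show ?case by (auto intro: kjoin_k_mono)
next
  case (Ex x \<phi>) then show ?case by (auto intro: SUP_k_mono)
next
  case (All x \<phi>) then show ?case by (auto intro: INF_k_mono)
qed (simp add: k_refl)

lemma Psi_t_mono_antimono:
  assumes "v \<le> v'" and "w' \<le> w"
  shows "Psi kInf kSup neg a P v w \<le> Psi kInf kSup neg a P v' w'"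
  unfolding le_fun_def Psi_def
  using contra_t_mono_antimono[OF assms] by (auto split: prod.split)

lemma Psi_k_mono:
  fixes P :: "('p, 'f, 'v, 'b) clause set" and w :: "('p, 'f, 'b) valuation"
  shows "monotone (vleqk leqk) (vleqk leqk) (\<lambda>x. Psi kInf kSup neg a P x w)"
proof (rule monotoneI)
  fix x y :: "('p, 'f, 'b) valuation" assume "vleqk leqk x y"
  then have "\<And>\<sigma> \<phi>. leqk (contra kInf kSup neg x w \<sigma> \<phi>) (contra kInf kSup neg y w \<sigma> \<phi>)"
    by (rule contra_k_mono)
  then show "vleqk leqk (Psi kInf kSup neg a P x w) (Psi kInf kSup neg a P y w)"
    by (auto simp: vleqk_def Psi_def k_refl split: prod.split)
qed

lemma kgfp_t_mono:
  assumes "monotone (vleqk leqk) (vleqk leqk) f"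
    and "monotone (vleqk leqk) (vleqk leqk) g"
    and "\<And>x y. x \<le> y \<Longrightarrow> f x \<le> g y"
  shows "kgfp leqk kSup f \<le> kgfp leqk kSup g"
  unfolding kgfp_eq_klfp_conversep
  by (rule k_order_dual.klfp_t_mono) (use assms monotone_vleqk_conversep in auto)

lemma Psi'_antimono:
  fixes P :: "('p, 'f, 'v, 'b) clause set"
  shows "antimono (Psi' leqk kInf kSup neg a P)"
proof (rule antimonoI)
  fix v v' :: "('p, 'f, 'b) valuation"
  assume "v \<le> v'"
  have Psi_le: "Psi kInf kSup neg a P x v' \<le> Psi kInf kSup neg a P y v" if "x \<le> y" for x y
    using that \<open>v \<le> v'\<close> by (rule Psi_t_mono_antimono)
  show "Psi' leqk kInf kSup neg a P v' \<le> Psi' leqk kInf kSup neg a P v"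
  proof (cases a)
    case AF then show ?thesis using Psi_le by (simp add: lfp_mono)
  next
    case AT then show ?thesis using Psi_le by (simp add: gfp_mono)
  next
    case AU then show ?thesis using k_order.klfp_t_mono[OF Psi_k_mono Psi_k_mono Psi_le] by simp
  next
    case AI then show ?thesis using kgfp_t_mono[OF Psi_k_mono Psi_k_mono Psi_le] by simp
  qed
qed

end

theorem proposition2:
  fixes leqk :: "'b::complete_lattice \<Rightarrow> 'b \<Rightarrow> bool"
    and kInf kSup :: "'b set \<Rightarrow> 'b"
    and neg :: "'b \<Rightarrow> 'b"
    and P :: "('p, 'f, 'v, 'b) clause set"
    and a :: alpha
  assumes "bilattice leqk kInf kSup neg"
    and "fitting_program P"
  shows "extreme_oscillation_points (Psi' leqk kInf kSup neg a P)
           (lfp (Psi' leqk kInf kSup neg a P \<circ> Psi' leqk kInf kSup neg a P))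
           (gfp (Psi' leqk kInf kSup neg a P \<circ> Psi' leqk kInf kSup neg a P))
       \<and> lfp (Psi' leqk kInf kSup neg a P \<circ> Psi' leqk kInf kSup neg a P)
         \<le> gfp (Psi' leqk kInf kSup neg a P \<circ> Psi' leqk kInf kSup neg a P)"
proof -
  have anti: "antimono (Psi' leqk kInf kSup neg a P)"
    using assms(1) by (rule bilattice.Psi'_antimono)
  show ?thesis
    using extreme_oscillation_points_lfp_gfp[OF anti]
      lfp_le_gfp[OF mono_comp_antimono[OF anti anti]] by blast
qed

end
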